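(* Let $T>0$, $\omega_p=\frac{\pi}{2T}$, $\omega_c>0$, $A_u>0$, $\tau\in\mathbb{R}$ and $\varphi_c\in\mathbb{R}$, and let $(\beta^I_m)_{m\in\mathbb{Z}},(\beta^Q_m)_{m\in\mathbb{Z}}$ be sequences in $\{-1,+1\}$. Define $$b_I(t)=\sum_{m=-\infty}^{\infty}\beta^I_m\,\Pi\!\left(\frac{t-2mT}{2T}\right),\qquad b_Q(t)=\sum_{m=-\infty}^{\infty}\beta^Q_m\,\Pi\!\left(\frac{t-(2m+1)T}{2T}\right),$$ where $\Pi(x)=1$ for $|x|<\tfrac12$, $\Pi(x)=\tfrac12$ for $|x|=\tfrac12$, $\Pi(x)=0$ for $|x|>\tfrac12$, and the interfering MSK signal $$u(t)=b_I(t-\tau)\cos\omega_p(t-\tau)\cos(\omega_c t+\varphi_c)+b_Q(t-\tau)\sin\omega_p(t-\tau)\sin(\omega_c t+\varphi_c).$$ Let $\phi_I(t)=\frac{2}{T}\cos\omega_p t\cos\omega_c t$, and for $k\in\mathbb{Z}$ let $$\Lambda^I_u(k)=\int_{(2k-1)T}^{(2k+1)T}\mathrm{LP}\big[A_u\,u(t)\,\phi_I(t)\big]\,dt,$$ where $\mathrm{LP}$ denotes ideal low-pass filtering that discards all components at carrier frequency $2\omega_c$ (i.e., after expanding the product by product-to-sum identities, all terms containing $\cos(2\omega_c t+\cdot)$ or $\sin(2\omega_c t+\cdot)$ are dropped). Set $\varphi_p=\omega_p\tau$, $k'=k-\lfloor \tau/2T\rfloor$, $\underline{\tau}=\tau-2\lfloor\tau/2T\rfloor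 T\in[0,2T)$, $k^{Q\prime}=k-\lfloor(\tau+T)/2T\rfloor$, and $\underline{\tau^Q}=\tau+T-2\lfloor(\tau+T)/2T\rfloor T\in[0,2T)$. Then $$\Lambda^I_u(k)=\frac{A_u}{2T}\Big\{\cos\varphi_c\Big[\cos\varphi_p\big(\underline{\tau}\,\beta^I_{k'-1}+(2T-\underline{\tau})\,\beta^I_{k'}\big)-\frac{2T}{\pi}\sin\varphi_p\big(\beta^I_{k'-1}-\beta^I_{k'}\big)\Big]$$ $$\qquad-\sin\varphi_c\Big[\sin\varphi_p\big(\underline{\tau^Q}\,\beta^Q_{k^{Q\prime}-1}+(2T-\underline{\tau^Q})\,\beta^Q_{k^{Q\prime}}\big)+\frac{2T}{\pi}\cos\varphi_p\big(\beta^Q_{k^{Q\prime}-1}-\beta^Q_{k^{Q\prime}}\big)\Big]\Big\}.$$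
   Context: This is the contribution of an interfering, minimum-shift-keying (MSK) modulated signal to the in-phase soft-bit decision variable of a matched-filter MSK demodulator synchronized to a different signal. $2T$ is the bit duration, $\omega_c$ the carrier angular frequency, $\tau$ the time offset of the interferer (positive means delayed), $\varphi_c$ its carrier phase offset, $A_u$ its received amplitude, and $\beta^I_m,\beta^Q_m$ its in-phase and quadrature information bits; the quadrature bit stream is staggered by $T$ relative to the in-phase one. *)

theory Defs
  imports "HOL-Analysis.Analysis"
begin

definition rect :: "real \<Rightarrow> real" where
  "rect x = (if \<bar>x\<bar> < 1/2 then 1 else if \<bar>x\<bar> = 1/2 then 1/2 else 0)"

definition bI :: "real \<Rightarrow> (int \<Rightarrow> real) \<Rightarrow> real \<Rightarrow> real" where
  "bI T \<beta> t = (\<Sum>\<^sub>\<infinity>m::int. \<beta> m * rect ((t - 2 * of_int m * T) / (2 * T)))"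

definition bQ :: "real \<Rightarrow> (int \<Rightarrow> real) \<Rightarrow> real \<Rightarrow> real" where
  "bQ T \<beta> t = (\<Sum>\<^sub>\<infinity>m::int. \<beta> m * rect ((t - (2 * of_int m + 1) * T) / (2 * T)))"

definition msk_u :: "real \<Rightarrow> real \<Rightarrow> real \<Rightarrow> real \<Rightarrow> real \<Rightarrow> (int \<Rightarrow> real) \<Rightarrow> (int \<Rightarrow> real) \<Rightarrow> real \<Rightarrow> real" where
  "msk_u T wp wc \<tau> \<phi>c \<beta>I \<beta>Q t =
     bI T \<beta>I (t - \<tau>) * cos (wp * (t - \<tau>)) * cos (wc * t + \<phi>c)
   + bQ T \<beta>Q (t - \<tau>) * sin (wp * (t - \<tau>)) * sin (wc * t + \<phi>c)"

definition phiI :: "real \<Rightarrow> real \<Rightarrow> real \<Rightarrow> real \<Rightarrow> real" where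
  "phiI T wp wc t = 2 / T * cos (wp * t) * cos (wc * t)"

text \<open>Product-to-sum expansion of A_u u(t) phi_I(t):
  cos(wc t + pc) cos(wc t) = (cos(2 wc t + pc) + cos pc)/2 and
  sin(wc t + pc) cos(wc t) = (sin(2 wc t + pc) + sin pc)/2.
  The components at 2 wc are collected in prod_hf, the rest in prod_lp.
  The ideal low-pass filter LP keeps exactly prod_lp.\<close>
definition prod_lp :: "real \<Rightarrow> real \<Rightarrow> real \<Rightarrow> real \<Rightarrow> real \<Rightarrow> real \<Rightarrow> (int \<Rightarrow> real) \<Rightarrow> (int \<Rightarrow> real) \<Rightarrow> real \<Rightarrow> real" where
  "prod_lp Au T wp wc \<tau> \<phi>c \<beta>I \<beta>Q t =
     Au * (2 / T) * cos (wp * t) *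
       (bI T \<beta>I (t - \<tau>) * cos (wp * (t - \<tau>)) * (cos \<phi>c / 2)
      + bQ T \<beta>Q (t - \<tau>) * sin (wp * (t - \<tau>)) * (sin \<phi>c / 2))"

definition prod_hf :: "real \<Rightarrow> real \<Rightarrow> real \<Rightarrow> real \<Rightarrow> real \<Rightarrow> real \<Rightarrow> (int \<Rightarrow> real) \<Rightarrow> (int \<Rightarrow> real) \<Rightarrow> real \<Rightarrow> real" where
  "prod_hf Au T wp wc \<tau> \<phi>c \<beta>I \<beta>Q t =
     Au * (2 / T) * cos (wp * t) *
       (bI T \<beta>I (t - \<tau>) * cos (wp * (t - \<tau>)) * (cos (2 * wc * t + \<phi>c) / 2)
      + bQ T \<beta>Q (t - \<tau>) * sin (wp * (t - \<tau>)) * (sin (2 * wc * t + \<phi>c) / 2))"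

lemma prod_split:
  "Au * msk_u T wp wc \<tau> \<phi>c \<beta>I \<beta>Q t * phiI T wp wc t
   = prod_lp Au T wp wc \<tau> \<phi>c \<beta>I \<beta>Q t + prod_hf Au T wp wc \<tau> \<phi>c \<beta>I \<beta>Q t"
proof -
  have c0: "\<And>a b::real. cos b * cos a = (cos (a + b) + cos (b - a)) / 2"
    by (simp add: cos_add cos_diff)
  have s0: "\<And>a b::real. sin b * cos a = (sin (a + b) + sin (b - a)) / 2"
    by (simp add: sin_add sin_diff)
  have e1: "wc * t + (wc * t + \<phi>c) = 2 * wc * t + \<phi>c" by simp
  have e2: "(wc * t + \<phi>c) - wc * t = \<phi>c" by simp
  have c: "cos (wc * t + \<phi>c) * cos (wc * t) = (cos (2 * wc * t + \<phi>c) + cos \<phi>c) / 2"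
    using c0[where a="wc * t" and b="wc * t + \<phi>c"] by (simp only: e1 e2)
  have s: "sin (wc * t + \<phi>c) * cos (wc * t) = (sin (2 * wc * t + \<phi>c) + sin \<phi>c) / 2"
    using s0[where a="wc * t" and b="wc * t + \<phi>c"] by (simp only: e1 e2)
  show ?thesis
    unfolding msk_u_def phiI_def prod_lp_def prod_hf_def
  proof -
    define C where "C = cos (wc * t + \<phi>c)"
    define S where "S = sin (wc * t + \<phi>c)"
    define c0 where "c0 = cos (wc * t)"
    define C2 where "C2 = cos (2 * wc * t + \<phi>c)"
    define S2 where "S2 = sin (2 * wc * t + \<phi>c)"
    define x where "x = bI T \<beta>I (t - \<tau>) * cos (wp * (t - \<tau>))"
    define y where "y = bQ T \<beta>Q (t - \<tau>) * sin (wp * (t - \<tau>))"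
    define q where "q = 2 / T * cos (wp * t)"
    have cc: "C * c0 = (C2 + cos \<phi>c) / 2" using c by (simp add: C_def c0_def C2_def)
    have ss: "S * c0 = (S2 + sin \<phi>c) / 2" using s by (simp add: S_def c0_def S2_def)
    have "Au * (x * C + y * S) * (q * c0) = Au * q * (x * (C * c0) + y * (S * c0))"
      by (simp add: algebra_simps)
    also have "\<dots> = Au * q * (x * (cos \<phi>c / 2) + y * (sin \<phi>c / 2))
                    + Au * q * (x * (C2 / 2) + y * (S2 / 2))"
      unfolding cc ss by (simp add: algebra_simps add_divide_distrib)
    finally have "Au * (x * C + y * S) * (q * c0) = Au * q * (x * (cos \<phi>c / 2) + y * (sin \<phi>c / 2))
                    + Au * q * (x * (C2 / 2) + y * (S2 / 2))" .
    then show "Au * (bI T \<beta>I (t - \<tau>) * cos (wp * (t - \<tau>)) * cos (wc * t + \<phi>c) +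
           bQ T \<beta>Q (t - \<tau>) * sin (wp * (t - \<tau>)) * sin (wc * t + \<phi>c)) *
          (2 / T * cos (wp * t) * cos (wc * t)) =
    Au * (2 / T) * cos (wp * t) *
    (bI T \<beta>I (t - \<tau>) * cos (wp * (t - \<tau>)) * (cos \<phi>c / 2) +
     bQ T \<beta>Q (t - \<tau>) * sin (wp * (t - \<tau>)) * (sin \<phi>c / 2)) +
    Au * (2 / T) * cos (wp * t) *
    (bI T \<beta>I (t - \<tau>) * cos (wp * (t - \<tau>)) * (cos (2 * wc * t + \<phi>c) / 2) +
     bQ T \<beta>Q (t - \<tau>) * sin (wp * (t - \<tau>)) * (sin (2 * wc * t + \<phi>c) / 2))"
      unfolding C_def S_def c0_def C2_def S2_def x_def y_def q_def
      by (simp add: mult.assoc)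
  qed
qed

definition LambdaI :: "real \<Rightarrow> real \<Rightarrow> real \<Rightarrow> real \<Rightarrow> real \<Rightarrow> real \<Rightarrow> (int \<Rightarrow> real) \<Rightarrow> (int \<Rightarrow> real) \<Rightarrow> int \<Rightarrow> real" where
  "LambdaI Au T wp wc \<tau> \<phi>c \<beta>I \<beta>Q k =
     integral {(2 * of_int k - 1) * T .. (2 * of_int k + 1) * T}
       (prod_lp Au T wp wc \<tau> \<phi>c \<beta>I \<beta>Q)"

end

theory Submission
  imports Defs
begin

text \<open>On the bit interval \<open>[(2k-1)T, (2k+1)T]\<close> the delayed waveform \<open>b\<^sub>I(t - \<tau>)\<close> jumps at
  most once, at \<open>t = (2k-1)T + \<tau>\<close> reduced modulo \<open>2T\<close>, so the low-pass integral splits into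
  two integrals of \<open>cos \<omega>\<^sub>p t cos \<omega>\<^sub>p(t - \<tau>)\<close>, whose antiderivative
  \<open>sin \<omega>\<^sub>p(2t - \<tau>) / (4\<omega>\<^sub>p) + t cos \<phi>\<^sub>p / 2\<close> takes the values \<open>\<plusminus>sin \<phi>\<^sub>p\<close> at the
  break points because \<open>\<omega>\<^sub>p T = \<pi>/2\<close>.  For the same reason the quadrature branch
  \<open>b\<^sub>Q(t - \<tau>) sin \<omega>\<^sub>p(t - \<tau>)\<close> is the in-phase branch delayed by \<open>\<tau> + T\<close>, so the
  quadrature bracket is the in-phase one with \<open>\<phi>\<^sub>p\<close> replaced by \<open>\<phi>\<^sub>p + \<pi>/2\<close>.\<close>

lemma rect_eq_1: "\<bar>x\<bar> < 1/2 \<Longrightarrow> rect x = 1"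
  by (simp add: rect_def)

lemma rect_eq_0: "\<bar>x\<bar> > 1/2 \<Longrightarrow> rect x = 0"
  by (simp add: rect_def)

lemma bI_eq:
  assumes T: "T > 0" and x: "\<bar>x - 2 * of_int m * T\<bar> < T"
  shows "bI T \<beta> x = \<beta> m"
proof -
  have off_pulse: "rect ((x - 2 * of_int j * T) / (2 * T)) = 0" if "j \<noteq> m" for j
  proof (rule rect_eq_0)
    have "(1::real) \<le> \<bar>of_int (j - m)\<bar>" using that by linarith
    then have "2 * T \<le> 2 * T * \<bar>of_int (j - m)\<bar>" using T by simp
    also have "\<dots> = \<bar>2 * T * of_int (j - m)\<bar>"
      using T by (simp add: abs_mult)
    also have "\<dots> = \<bar>2 * of_int j * T - 2 * of_int m * T\<bar>"
      by (simp add: algebra_simps)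
    also have "\<dots> \<le> \<bar>x - 2 * of_int j * T\<bar> + \<bar>x - 2 * of_int m * T\<bar>" by linarith
    finally show "\<bar>(x - 2 * of_int j * T) / (2 * T)\<bar> > 1/2"
      using T x by (simp add: abs_divide field_simps)
  qed
  have "bI T \<beta> x = (\<Sum>\<^sub>\<infinity>j\<in>{m}. \<beta> j * rect ((x - 2 * of_int j * T) / (2 * T)))"
    unfolding bI_def by (rule infsum_cong_neutral) (auto simp: off_pulse)
  also have "\<dots> = \<beta> m"
    using T x by (simp add: rect_eq_1 abs_divide)
  finally show ?thesis .
qed

lemma bQ_eq_bI: "bQ T \<beta> x = bI T \<beta> (x - T)"
  unfolding bQ_def bI_def by (simp add: algebra_simps)

lemma floor_divide_residue_bounds:
  fixes y p :: real
  assumes "p > 0"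
  shows "0 \<le> y - of_int \<lfloor>y / p\<rfloor> * p" and "y - of_int \<lfloor>y / p\<rfloor> * p < p"
proof -
  have "of_int \<lfloor>y / p\<rfloor> * p \<le> y / p * p"
    using assms by (intro mult_right_mono) simp_all
  then show "0 \<le> y - of_int \<lfloor>y / p\<rfloor> * p" using assms by simp
  have "y / p * p < (of_int \<lfloor>y / p\<rfloor> + 1) * p"
    using assms by (intro mult_strict_right_mono) linarith+
  then show "y - of_int \<lfloor>y / p\<rfloor> * p < p" using assms by (simp add: algebra_simps)
qed

lemma bI_delayed_on_bit:
  assumes T: "T > 0" and \<tau>: "\<tau> = d + 2 * of_int n * T" and d: "0 \<le> d" "d < 2 * T"
    and t: "(2 * of_int k - 1) * T < t" "t < (2 * of_int k + 1) * T"
    and jump: "t \<noteq> (2 * of_int k - 1) * T + d"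
  shows "bI T \<beta> (t - \<tau>) =
    (if t < (2 * of_int k - 1) * T + d then \<beta> (k - n - 1) else \<beta> (k - n))"
proof (cases "t < (2 * of_int k - 1) * T + d")
  case True
  have "\<bar>t - \<tau> - 2 * of_int (k - n - 1) * T\<bar> < T"
    using True t d unfolding \<tau> by (simp add: abs_less_iff algebra_simps)
  then show ?thesis using True by (simp add: bI_eq T)
next
  case False
  have "\<bar>t - \<tau> - 2 * of_int (k - n) * T\<bar> < T"
    using False jump t d unfolding \<tau> by (simp add: abs_less_iff algebra_simps)
  then show ?thesis using False by (simp add: bI_eq T)
qed

lemma has_integral_step_times:
  fixes a b c p q :: real
  assumes "a \<le> c" "c \<le> b"
    and F: "\<And>t. (F has_real_derivative f t) (at t)"
    and h: "\<And>t. t \<in> {a..b} - {a, b, c} \<Longrightarrow> h t = (if t < c then p else q) * f t"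
  shows "(h has_integral (p * (F c - F a) + q * (F b - F c))) {a..b}"
proof -
  have ftc: "(f has_integral (F y - F x)) {x..y}" if "x \<le> y" for x y
    using that by (intro fundamental_theorem_of_calculus)
      (auto simp: has_real_derivative_iff_has_vector_derivative[symmetric]
        intro: has_field_derivative_at_within F)
  have "(h has_integral (p * (F c - F a))) {a..c}"
    by (rule has_integral_spike_finite[of "{a, c}" _ _ "\<lambda>t. p * f t"])
      (use assms in \<open>auto intro: has_integral_mult_right ftc\<close>)
  moreover have "(h has_integral (q * (F b - F c))) {c..b}"
    by (rule has_integral_spike_finite[of "{c, b}" _ _ "\<lambda>t. q * f t"])
      (use assms in \<open>auto intro: has_integral_mult_right ftc\<close>)
  ultimately show ?thesis by (rule has_integral_combine[OF assms(1,2)])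
qed

lemma cos_mul_cos_shift_antiderivative:
  fixes w \<tau> :: real
  assumes "w \<noteq> 0"
  shows "((\<lambda>t. sin (w * (2 * t - \<tau>)) / (4 * w) + t * cos (w * \<tau>) / 2)
          has_real_derivative cos (w * t) * cos (w * (t - \<tau>))) (at t)"
proof -
  have "cos (w * t) * cos (w * (t - \<tau>)) = (cos (w * \<tau>) + cos (w * (2 * t - \<tau>))) / 2"
    unfolding cos_times_cos by (simp add: algebra_simps)
  then have "cos (w * (2 * t - \<tau>)) * (2 * w) / (4 * w) + cos (w * \<tau>) / 2
             = cos (w * t) * cos (w * (t - \<tau>))"
    using assms by (simp add: field_simps)
  then show ?thesis
    by (auto intro!: derivative_eq_intros)
qed

lemma sin_odd_multiple_pi_add:
  assumes "odd j"
  shows "sin (pi * of_int j + x) = - sin x"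
  using assms by (simp add: sin_add)

lemma bit_correlation_has_integral:
  fixes T w \<tau> d :: real and n k :: int and \<beta> :: "int \<Rightarrow> real"
  assumes T: "T > 0" and w: "w = pi / (2 * T)"
    and \<tau>: "\<tau> = d + 2 * of_int n * T" and d: "0 \<le> d" "d < 2 * T"
  shows "((\<lambda>t. bI T \<beta> (t - \<tau>) * (cos (w * t) * cos (w * (t - \<tau>)))) has_integral
           (cos (w * \<tau>) * (d * \<beta> (k - n - 1) + (2 * T - d) * \<beta> (k - n))
            - 2 * T / pi * sin (w * \<tau>) * (\<beta> (k - n - 1) - \<beta> (k - n))) / 2)
         {(2 * of_int k - 1) * T .. (2 * of_int k + 1) * T}"
proof -
  define F where "F t = sin (w * (2 * t - \<tau>)) / (4 * w) + t * cos (w * \<tau>) / 2" for t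
  define a where "a = (2 * of_int k - 1) * T"
  define b where "b = (2 * of_int k + 1) * T"
  define c where "c = a + d"
  have F': "(F has_real_derivative cos (w * t) * cos (w * (t - \<tau>))) (at t)" for t
    unfolding F_def using T w by (intro cos_mul_cos_shift_antiderivative) simp
  have step: "((\<lambda>t. bI T \<beta> (t - \<tau>) * (cos (w * t) * cos (w * (t - \<tau>)))) has_integral
         \<beta> (k - n - 1) * (F c - F a) + \<beta> (k - n) * (F b - F c)) {a..b}"
  proof (rule has_integral_step_times[OF _ _ F'])
    show "a \<le> c" "c \<le> b" using T d by (simp_all add: a_def b_def c_def algebra_simps)
  next
    fix t assume "t \<in> {a..b} - {a, b, c}"
    then show "bI T \<beta> (t - \<tau>) * (cos (w * t) * cos (w * (t - \<tau>))) =
        (if t < c then \<beta> (k - n - 1) else \<beta> (k - n)) * (cos (w * t) * cos (w * (t - \<tau>)))"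
      using bI_delayed_on_bit[OF T \<tau> d] by (auto simp: a_def b_def c_def)
  qed
  have "sin (w * (2 * a - \<tau>)) = sin (w * \<tau>)"
  proof -
    have "w * (2 * a - \<tau>) = pi * of_int (2 * k - 1) + - (w * \<tau>)"
      using T by (simp add: a_def w field_simps)
    then show ?thesis using sin_odd_multiple_pi_add[of "2 * k - 1" "- (w * \<tau>)"] by simp
  qed
  moreover have "sin (w * (2 * b - \<tau>)) = sin (w * \<tau>)"
  proof -
    have "w * (2 * b - \<tau>) = pi * of_int (2 * k + 1) + - (w * \<tau>)"
      using T by (simp add: b_def w field_simps)
    then show ?thesis using sin_odd_multiple_pi_add[of "2 * k + 1" "- (w * \<tau>)"] by simp
  qed
  moreover have "sin (w * (2 * c - \<tau>)) = - sin (w * \<tau>)"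
  proof -
    have "w * (2 * c - \<tau>) = pi * of_int (2 * (k - n) - 1) + w * \<tau>"
      using T by (simp add: a_def c_def \<tau> w field_simps)
    then show ?thesis using sin_odd_multiple_pi_add[of "2 * (k - n) - 1" "w * \<tau>"] by simp
  qed
  ultimately have F_increments: "F c - F a = d * cos (w * \<tau>) / 2 - T / pi * sin (w * \<tau>)"
    "F b - F c = (2 * T - d) * cos (w * \<tau>) / 2 + T / pi * sin (w * \<tau>)"
    using T by (simp_all add: F_def a_def b_def c_def w field_simps)
  have "\<beta> (k - n - 1) * (F c - F a) + \<beta> (k - n) * (F b - F c) =
      (cos (w * \<tau>) * (d * \<beta> (k - n - 1) + (2 * T - d) * \<beta> (k - n))
       - 2 * T / pi * sin (w * \<tau>) * (\<beta> (k - n - 1) - \<beta> (k - n))) / 2"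
    unfolding F_increments by (simp add: field_simps)
  with step show ?thesis
    unfolding a_def b_def by simp
qed

lemma prod_lp_as_in_phase_correlations:
  assumes T: "T > 0" and wp: "wp = pi / (2 * T)"
  shows "prod_lp Au T wp wc \<tau> \<phi>c \<beta>I \<beta>Q t =
    Au / T * (cos \<phi>c * (bI T \<beta>I (t - \<tau>) * (cos (wp * t) * cos (wp * (t - \<tau>))))
            + sin \<phi>c * (bI T \<beta>Q (t - (\<tau> + T)) * (cos (wp * t) * cos (wp * (t - (\<tau> + T))))))"
proof -
  have "wp * (t - (\<tau> + T)) = wp * (t - \<tau>) - pi / 2"
    using T by (simp add: wp field_simps)
  then have "cos (wp * (t - (\<tau> + T))) = cos (wp * (t - \<tau>) - pi / 2)"
    by simp
  also have "\<dots> = sin (wp * (t - \<tau>))"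
    by (simp add: cos_diff)
  finally show ?thesis
    using T by (simp add: prod_lp_def bQ_eq_bI field_simps)
qed

theorem theorem1:
  fixes T wp wc Au \<tau> \<phi>c :: real and \<beta>I \<beta>Q :: "int \<Rightarrow> real" and k :: int
  assumes "T > 0" and "wp = pi / (2 * T)" and "wc > 0" and "Au > 0"
    and "\<And>m. \<beta>I m \<in> {-1, 1}" and "\<And>m. \<beta>Q m \<in> {-1, 1}"
  shows "let \<phi>p = wp * \<tau>;
             k' = k - \<lfloor>\<tau> / (2 * T)\<rfloor>;
             t' = \<tau> - 2 * of_int \<lfloor>\<tau> / (2 * T)\<rfloor> * T;
             kQ = k - \<lfloor>(\<tau> + T) / (2 * T)\<rfloor>;
             tQ = \<tau> + T - 2 * of_int \<lfloor>(\<tau> + T) / (2 * T)\<rfloor> * T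
         in LambdaI Au T wp wc \<tau> \<phi>c \<beta>I \<beta>Q k =
            Au / (2 * T) *
              (cos \<phi>c * (cos \<phi>p * (t' * \<beta>I (k' - 1) + (2 * T - t') * \<beta>I k')
                          - 2 * T / pi * sin \<phi>p * (\<beta>I (k' - 1) - \<beta>I k'))
             - sin \<phi>c * (sin \<phi>p * (tQ * \<beta>Q (kQ - 1) + (2 * T - tQ) * \<beta>Q kQ)
                          + 2 * T / pi * cos \<phi>p * (\<beta>Q (kQ - 1) - \<beta>Q kQ)))"
proof -
  note T = \<open>T > 0\<close> and wp = \<open>wp = pi / (2 * T)\<close>
  define n where "n = \<lfloor>\<tau> / (2 * T)\<rfloor>"
  define nQ where "nQ = \<lfloor>(\<tau> + T) / (2 * T)\<rfloor>"
  define d where "d = \<tau> - 2 * of_int n * T"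
  define dQ where "dQ = \<tau> + T - 2 * of_int nQ * T"
  have "d = \<tau> - of_int \<lfloor>\<tau> / (2 * T)\<rfloor> * (2 * T)"
    "dQ = (\<tau> + T) - of_int \<lfloor>(\<tau> + T) / (2 * T)\<rfloor> * (2 * T)"
    by (simp_all add: d_def dQ_def n_def nQ_def)
  then have d: "0 \<le> d" "d < 2 * T" and dQ: "0 \<le> dQ" "dQ < 2 * T"
    using floor_divide_residue_bounds[of "2 * T"] T by simp_all
  have "\<tau> = d + 2 * of_int n * T" "\<tau> + T = dQ + 2 * of_int nQ * T"
    by (simp_all add: d_def dQ_def)
  from this[THEN bit_correlation_has_integral[OF T wp]] d dQ
  have "LambdaI Au T wp wc \<tau> \<phi>c \<beta>I \<beta>Q k = Au / T *
    (cos \<phi>c * ((cos (wp * \<tau>) * (d * \<beta>I (k - n - 1) + (2 * T - d) * \<beta>I (k - n))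
          - 2 * T / pi * sin (wp * \<tau>) * (\<beta>I (k - n - 1) - \<beta>I (k - n))) / 2)
   + sin \<phi>c * ((cos (wp * (\<tau> + T)) * (dQ * \<beta>Q (k - nQ - 1) + (2 * T - dQ) * \<beta>Q (k - nQ))
          - 2 * T / pi * sin (wp * (\<tau> + T)) * (\<beta>Q (k - nQ - 1) - \<beta>Q (k - nQ))) / 2))"
    unfolding LambdaI_def prod_lp_as_in_phase_correlations[OF T wp]
    by (intro integral_unique has_integral_mult_right has_integral_add)
  moreover have "cos (wp * (\<tau> + T)) = - sin (wp * \<tau>)" "sin (wp * (\<tau> + T)) = cos (wp * \<tau>)"
    using T by (simp_all add: wp distrib_left cos_add sin_add)
  ultimately show ?thesis
    unfolding Let_def n_def[symmetric] nQ_def[symmetric] d_def[symmetric] dQ_def[symmetric]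
    using T by (simp add: field_simps)
qed

end
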